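(* For every graph $G$, $\operatorname{box}(G)\le \min\{2\,MED(G)+2,\ MED(\overline{G})\}$, where $\overline{G}$ is the complement of $G$.
   Context: A dominating edge set of a graph $H$ is a set $D$ of edges such that every edge of $H$ not in $D$ shares an endpoint with some edge of $D$; $MED(H)$ is the minimum cardinality of a dominating edge set of $H$. The boxicity $\operatorname{box}(G)$ is the minimum $b$ such that $G$ is the intersection graph of axis-parallel boxes in $\mathbb{R}^b$ (products of $b$ closed intervals), one box per vertex. *)

theory Defs
  imports Complex_Main
begin

definition graph :: "'a set \<Rightarrow> 'a set set \<Rightarrow> bool" where
  "graph V E \<longleftrightarrow> finite V \<and> E \<subseteq> {{u, v} | u v. u \<in> V \<and> v \<in> V \<and> u \<noteq> v}"

definition complement_edges :: "'a set \<Rightarrow> 'a set set \<Rightarrow> 'a set set" where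
  "complement_edges V E = {{u, v} | u v. u \<in> V \<and> v \<in> V \<and> u \<noteq> v \<and> {u, v} \<notin> E}"

definition dominating_edge_set :: "'a set set \<Rightarrow> 'a set set \<Rightarrow> bool" where
  "dominating_edge_set E D \<longleftrightarrow> D \<subseteq> E \<and> (\<forall>e \<in> E - D. \<exists>d \<in> D. e \<inter> d \<noteq> {})"

definition MED :: "'a set set \<Rightarrow> nat" where
  "MED E = (LEAST n. \<exists>D. dominating_edge_set E D \<and> card D = n)"

text \<open>Box representation in R^b: vertex v gets the box \<Prod>_{i<b} [l v i, r v i];
  distinct vertices are adjacent iff their boxes intersect.\<close>
definition box_rep :: "'a set \<Rightarrow> 'a set set \<Rightarrow> nat \<Rightarrow> ('a \<Rightarrow> nat \<Rightarrow> real) \<Rightarrow> ('a \<Rightarrow> nat \<Rightarrow> real) \<Rightarrow> bool" where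
  "box_rep V E b l r \<longleftrightarrow>
     (\<forall>v \<in> V. \<forall>i < b. l v i \<le> r v i) \<and>
     (\<forall>u \<in> V. \<forall>v \<in> V. u \<noteq> v \<longrightarrow>
        ({u, v} \<in> E \<longleftrightarrow> (\<forall>i < b. l u i \<le> r v i \<and> l v i \<le> r u i)))"

definition boxicity :: "'a set \<Rightarrow> 'a set set \<Rightarrow> nat" where
  "boxicity V E = (LEAST b. \<exists>l r. box_rep V E b l r)"

end

theory Submission
  imports Defs
begin

(* Roberts: box(G) <= k as soon as there are k interval graphs on V, each containing G, such
   that every non-edge of G is missing from one of them.

   For a non-edge {a, b}, possibly with a = b, put a at the point 0, b at the point 3, and any
   other vertex x on an interval from 0 (if x ~ a) or 1 (otherwise) to 3 (if x ~ b) or 2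
   (otherwise). This interval graph contains G and misses every non-edge at a or b.

   The edges of a dominating edge set of the complement are non-edges meeting all non-edges,
   whence box(G) <= MED(complement G). The ends of a dominating edge set D of G form a vertex
   cover C with |C| <= 2|D|. The interval graphs of the single vertices of C, together with one
   mapping the independent set V - C to distinct points and C to a common long interval, give
   box(G) <= 2 MED(G) + 1. *)

lemma graph_complement_edges: "finite V \<Longrightarrow> graph V (complement_edges V E)"
  unfolding graph_def complement_edges_def by blast

lemma graph_finite_edges:
  assumes "graph V E" shows "finite E"
proof -
  have "E \<subseteq> Pow V" using assms unfolding graph_def by blast
  moreover have "finite (Pow V)" using assms unfolding graph_def by simp
  ultimately show ?thesis by (rule finite_subset)
qed

lemma MED_attained: "\<exists>D. dominating_edge_set E D \<and> card D = MED E"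
proof -
  have "\<exists>n D. dominating_edge_set E D \<and> card D = n"
    unfolding dominating_edge_set_def by blast
  then show ?thesis unfolding MED_def by (rule LeastI_ex)
qed

lemma dominating_edge_set_meets:
  assumes "dominating_edge_set E D" and "e \<in> E" and "e \<noteq> {}"
  shows "\<exists>d \<in> D. e \<inter> d \<noteq> {}"
  using assms unfolding dominating_edge_set_def by (cases "e \<in> D") auto

lemma graph_edge_card: "graph V E \<Longrightarrow> e \<in> E \<Longrightarrow> card e = 2"
  unfolding graph_def by auto

definition intervals_meet :: "('a \<Rightarrow> real) \<Rightarrow> ('a \<Rightarrow> real) \<Rightarrow> 'a \<Rightarrow> 'a \<Rightarrow> bool" where
  "intervals_meet l r u v \<longleftrightarrow> l u \<le> r v \<and> l v \<le> r u"

definition interval_supergraph :: "'a set \<Rightarrow> 'a set set \<Rightarrow> ('a \<Rightarrow> real) \<Rightarrow> ('a \<Rightarrow> real) \<Rightarrow> bool" where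
  "interval_supergraph V E l r \<longleftrightarrow>
     (\<forall>v \<in> V. l v \<le> r v) \<and> (\<forall>u \<in> V. \<forall>v \<in> V. {u, v} \<in> E \<longrightarrow> intervals_meet l r u v)"

lemma boxicity_le_card_interval_supergraphs:
  assumes "finite F"
    and supergraphs: "\<forall>(l, r) \<in> F. interval_supergraph V E l r"
    and separating: "\<And>u v. u \<in> V \<Longrightarrow> v \<in> V \<Longrightarrow> u \<noteq> v \<Longrightarrow> {u, v} \<notin> E \<Longrightarrow>
      \<exists>(l, r) \<in> F. \<not> intervals_meet l r u v"
  shows "boxicity V E \<le> card F"
proof -
  obtain h where h: "bij_betw h {0..<card F} F"
    using ex_bij_betw_nat_finite[OF \<open>finite F\<close>] by blast
  define l where "l v i = fst (h i) v" for v i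
  define r where "r v i = snd (h i) v" for v i
  have dim: "interval_supergraph V E (\<lambda>v. l v i) (\<lambda>v. r v i)" if "i < card F" for i
  proof -
    have "h i \<in> F" using bij_betwE[OF h] that by simp
    then show ?thesis using supergraphs unfolding l_def r_def by (simp add: split_beta)
  qed
  have "box_rep V E (card F) l r"
    unfolding box_rep_def
  proof (intro conjI ballI allI impI)
    fix v i assume "v \<in> V" "i < card F"
    then show "l v i \<le> r v i" using dim unfolding interval_supergraph_def by simp
  next
    fix u v assume uv: "u \<in> V" "v \<in> V" "u \<noteq> v"
    show "{u, v} \<in> E \<longleftrightarrow> (\<forall>i < card F. l u i \<le> r v i \<and> l v i \<le> r u i)"
    proof
      assume "{u, v} \<in> E"
      then show "\<forall>i < card F. l u i \<le> r v i \<and> l v i \<le> r u i"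
        using dim uv unfolding interval_supergraph_def intervals_meet_def by simp
    next
      assume meet: "\<forall>i < card F. l u i \<le> r v i \<and> l v i \<le> r u i"
      show "{u, v} \<in> E"
      proof (rule ccontr)
        assume "{u, v} \<notin> E"
        then obtain p where "p \<in> F" "\<not> intervals_meet (fst p) (snd p) u v"
          using separating[OF uv] by (auto simp: split_beta)
        moreover obtain i where "i < card F" "p = h i"
          using bij_betw_imp_surj_on[OF h] \<open>p \<in> F\<close> by force
        ultimately show False using meet unfolding l_def r_def intervals_meet_def by auto
      qed
    qed
  qed
  then show ?thesis unfolding boxicity_def by (blast intro: Least_le)
qed

lemma interval_supergraph_separating_non_edge:
  assumes "{a, b} \<notin> E"
  shows "\<exists>l r. interval_supergraph V E l r \<and>
    (\<forall>u v. u \<noteq> v \<longrightarrow> {u, v} \<notin> E \<longrightarrow> {u, v} \<inter> {a, b} \<noteq> {} \<longrightarrow> \<not> intervals_meet l r u v)"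
proof -
  define l :: "_ \<Rightarrow> real" where
    "l x = (if x = a then 0 else if x = b then 3 else if {x, a} \<in> E then 0 else 1)" for x
  define r :: "_ \<Rightarrow> real" where
    "r x = (if x = a then 0 else if x = b then 3 else if {x, b} \<in> E then 3 else 2)" for x
  have "intervals_meet l r u v" if "{u, v} \<in> E" for u v
    using that assms unfolding intervals_meet_def l_def r_def
    by (auto simp: insert_commute)
  moreover have "l v \<le> r v" for v
    unfolding l_def r_def by simp
  moreover have "\<not> intervals_meet l r u v"
    if "u \<noteq> v" "{u, v} \<notin> E" "{u, v} \<inter> {a, b} \<noteq> {}" for u v
    using that unfolding intervals_meet_def l_def r_def by (auto simp: insert_commute)
  ultimately show ?thesis unfolding interval_supergraph_def by blast
qed

lemma interval_supergraphs_separating_cover: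
  assumes "finite I" and non_edges: "\<And>d. d \<in> I \<Longrightarrow> \<exists>a b. d = {a, b} \<and> d \<notin> E"
  obtains F where "finite F" "card F \<le> card I" "\<forall>(l, r) \<in> F. interval_supergraph V E l r"
    "\<And>u v d. u \<noteq> v \<Longrightarrow> {u, v} \<notin> E \<Longrightarrow> d \<in> I \<Longrightarrow> {u, v} \<inter> d \<noteq> {} \<Longrightarrow>
      \<exists>(l, r) \<in> F. \<not> intervals_meet l r u v"
proof -
  let ?good = "\<lambda>d l r. interval_supergraph V E l r \<and>
    (\<forall>u v. u \<noteq> v \<longrightarrow> {u, v} \<notin> E \<longrightarrow> {u, v} \<inter> d \<noteq> {} \<longrightarrow> \<not> intervals_meet l r u v)"
  have "\<forall>d \<in> I. \<exists>p. ?good d (fst p) (snd p)"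
  proof
    fix d assume "d \<in> I"
    then obtain a b where "d = {a, b}" "d \<notin> E" using non_edges by blast
    then show "\<exists>p. ?good d (fst p) (snd p)"
      using interval_supergraph_separating_non_edge[of a b E V] by (simp add: split_paired_Ex)
  qed
  then have "\<exists>f. \<forall>d \<in> I. ?good d (fst (f d)) (snd (f d))" by (rule bchoice)
  then obtain f where f: "\<forall>d \<in> I. ?good d (fst (f d)) (snd (f d))" by blast
  show ?thesis
  proof (rule that[of "f ` I"])
    show "finite (f ` I)" "card (f ` I) \<le> card I"
      using \<open>finite I\<close> by (simp_all add: card_image_le)
    show "\<forall>(l, r) \<in> f ` I. interval_supergraph V E l r" using f by (auto simp: split_beta)
    show "\<exists>(l, r) \<in> f ` I. \<not> intervals_meet l r u v"
      if "u \<noteq> v" "{u, v} \<notin> E" "d \<in> I" "{u, v} \<inter> d \<noteq> {}" for u v d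
      using f that by (intro bexI[of _ "f d"]) (auto simp: split_beta)
  qed
qed

lemma interval_supergraph_separating_independent_set:
  assumes "finite S" and independent: "\<And>u v. u \<in> S \<Longrightarrow> v \<in> S \<Longrightarrow> {u, v} \<notin> E"
  shows "\<exists>l r. interval_supergraph V E l r \<and>
    (\<forall>u \<in> S. \<forall>v \<in> S. u \<noteq> v \<longrightarrow> \<not> intervals_meet l r u v)"
proof -
  obtain g where g: "bij_betw g S {0..<card S}"
    using ex_bij_betw_finite_nat[OF \<open>finite S\<close>] by blast
  define l :: "_ \<Rightarrow> real" where "l v = (if v \<in> S then real (g v) else 0)" for v
  define r :: "_ \<Rightarrow> real" where "r v = (if v \<in> S then real (g v) else real (card S))" for v
  have bound: "g v < card S" if "v \<in> S" for v
    using bij_betwE[OF g] that by auto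
  have "intervals_meet l r u v" if "{u, v} \<in> E" for u v
    using independent[of u v] bound[of u] bound[of v] that
    unfolding intervals_meet_def l_def r_def by auto
  moreover have "l v \<le> r v" for v
    unfolding l_def r_def by simp
  moreover have "\<not> intervals_meet l r u v" if "u \<in> S" "v \<in> S" "u \<noteq> v" for u v
  proof -
    have "g u \<noteq> g v" using bij_betw_imp_inj_on[OF g] that by (auto simp: inj_on_def)
    then show ?thesis using that unfolding intervals_meet_def l_def r_def by auto
  qed
  ultimately show ?thesis unfolding interval_supergraph_def by blast
qed

lemma graph_singleton_not_edge: "graph V E \<Longrightarrow> {v} \<notin> E"
  unfolding graph_def by (auto simp: doubleton_eq_iff)

lemma boxicity_le_card_vertex_cover:
  assumes G: "graph V E" and "C \<subseteq> V" and cover: "\<And>e. e \<in> E \<Longrightarrow> e \<inter> C \<noteq> {}"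
  shows "boxicity V E \<le> card C + 1"
proof -
  have "finite C" using G \<open>C \<subseteq> V\<close> unfolding graph_def by (auto intro: finite_subset)
  have singletons: "\<exists>a b. d = {a, b} \<and> d \<notin> E" if "d \<in> (\<lambda>c. {c}) ` C" for d
    using that graph_singleton_not_edge[OF G] by blast
  obtain F where F: "finite F" "card F \<le> card ((\<lambda>c. {c}) ` C)"
      "\<forall>(l, r) \<in> F. interval_supergraph V E l r"
      "\<And>u v d. u \<noteq> v \<Longrightarrow> {u, v} \<notin> E \<Longrightarrow> d \<in> (\<lambda>c. {c}) ` C \<Longrightarrow> {u, v} \<inter> d \<noteq> {} \<Longrightarrow>
        \<exists>(l, r) \<in> F. \<not> intervals_meet l r u v"
    using interval_supergraphs_separating_cover[OF finite_imageI singletons, where V = V] \<open>finite C\<close>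
    by blast
  have "finite (V - C)" using G unfolding graph_def by simp
  moreover have "{u, v} \<notin> E" if "u \<in> V - C" "v \<in> V - C" for u v
    using cover[of "{u, v}"] that by auto
  ultimately have "\<exists>l r. interval_supergraph V E l r \<and>
      (\<forall>u \<in> V - C. \<forall>v \<in> V - C. u \<noteq> v \<longrightarrow> \<not> intervals_meet l r u v)"
    by (rule interval_supergraph_separating_independent_set)
  then obtain l0 r0 where l0r0: "interval_supergraph V E l0 r0"
      "\<forall>u \<in> V - C. \<forall>v \<in> V - C. u \<noteq> v \<longrightarrow> \<not> intervals_meet l0 r0 u v"
    by blast
  have "boxicity V E \<le> card (insert (l0, r0) F)"
  proof (rule boxicity_le_card_interval_supergraphs)
    show "finite (insert (l0, r0) F)" using F(1) by simp
    show "\<forall>(l, r) \<in> insert (l0, r0) F. interval_supergraph V E l r" using F(3) l0r0(1) by simp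
    show "\<exists>(l, r) \<in> insert (l0, r0) F. \<not> intervals_meet l r u v"
      if "u \<in> V" "v \<in> V" "u \<noteq> v" "{u, v} \<notin> E" for u v
    proof (cases "u \<in> C \<or> v \<in> C")
      case True
      then obtain c where "c \<in> C" "{u, v} \<inter> {c} \<noteq> {}" by blast
      then show ?thesis using F(4)[of u v "{c}"] that by blast
    next
      case False
      then show ?thesis using l0r0(2) that by blast
    qed
  qed
  also have "\<dots> \<le> card F + 1" by (simp add: card_insert_le_m1)
  also have "\<dots> \<le> card C + 1" using F(2) card_image_le[OF \<open>finite C\<close>, of "\<lambda>c. {c}"] by simp
  finally show ?thesis .
qed

lemma boxicity_le_card_dominating_complement:
  assumes G: "graph V E" and D: "dominating_edge_set (complement_edges V E) D"
  shows "boxicity V E \<le> card D"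
proof -
  have "D \<subseteq> complement_edges V E" using D unfolding dominating_edge_set_def by blast
  moreover have "finite (complement_edges V E)"
    using G unfolding graph_def by (blast intro: graph_finite_edges graph_complement_edges)
  ultimately have "finite D" by (rule finite_subset)
  have non_edges: "\<exists>a b. d = {a, b} \<and> d \<notin> E" if "d \<in> D" for d
    using that \<open>D \<subseteq> complement_edges V E\<close> unfolding complement_edges_def by blast
  obtain F where F: "finite F" "card F \<le> card D"
      "\<forall>(l, r) \<in> F. interval_supergraph V E l r"
      "\<And>u v d. u \<noteq> v \<Longrightarrow> {u, v} \<notin> E \<Longrightarrow> d \<in> D \<Longrightarrow> {u, v} \<inter> d \<noteq> {} \<Longrightarrow>
        \<exists>(l, r) \<in> F. \<not> intervals_meet l r u v"
    using interval_supergraphs_separating_cover[OF \<open>finite D\<close> non_edges, where V = V] by blast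
  have "boxicity V E \<le> card F"
  proof (rule boxicity_le_card_interval_supergraphs[OF F(1,3)])
    fix u v assume uv: "u \<in> V" "v \<in> V" "u \<noteq> v" "{u, v} \<notin> E"
    then have "{u, v} \<in> complement_edges V E" unfolding complement_edges_def by blast
    then have "\<exists>d \<in> D. {u, v} \<inter> d \<noteq> {}"
      using dominating_edge_set_meets[OF D] by blast
    then show "\<exists>(l, r) \<in> F. \<not> intervals_meet l r u v" using F(4) uv by blast
  qed
  with F(2) show ?thesis by simp
qed

lemma card_Union_edges_le:
  assumes "graph V E" and "D \<subseteq> E"
  shows "card (\<Union>D) \<le> 2 * card D"
proof -
  have "card (\<Union>D) \<le> (\<Sum>d \<in> D. card d)" by (rule card_Union_le_sum_card)
  also have "\<dots> = 2 * card D"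
    using graph_edge_card[OF assms(1)] \<open>D \<subseteq> E\<close> by (simp add: subset_iff)
  finally show ?thesis .
qed

theorem theorem17:
  assumes "graph V E"
  shows "boxicity V E \<le> min (2 * MED E + 2) (MED (complement_edges V E))"
proof -
  obtain D where D: "dominating_edge_set E D" "card D = MED E"
    using MED_attained by blast
  obtain D' where D': "dominating_edge_set (complement_edges V E) D'"
    "card D' = MED (complement_edges V E)"
    using MED_attained by blast
  have "D \<subseteq> E" using D(1) unfolding dominating_edge_set_def by blast
  have "\<Union>D \<subseteq> V" using assms \<open>D \<subseteq> E\<close> unfolding graph_def by blast
  moreover have "e \<inter> \<Union>D \<noteq> {}" if "e \<in> E" for e
    using dominating_edge_set_meets[OF D(1) that] graph_edge_card[OF assms that] by fastforce
  ultimately have "boxicity V E \<le> card (\<Union>D) + 1"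
    by (rule boxicity_le_card_vertex_cover[OF assms])
  also have "\<dots> \<le> 2 * MED E + 2"
    using card_Union_edges_le[OF assms \<open>D \<subseteq> E\<close>] D(2) by simp
  finally have "boxicity V E \<le> 2 * MED E + 2" .
  moreover have "boxicity V E \<le> MED (complement_edges V E)"
    using boxicity_le_card_dominating_complement[OF assms D'(1)] D'(2) by simp
  ultimately show ?thesis by simp
qed

end
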